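(* For any $F\in\mathscr{F}_2$ and $i\in[F]$: (i) $\mathcal{P}^2_{\ddot{F},i}=\{01,10,11\}$ if $|\mathcal{P}^2_{F,i}|=3$, and $\mathcal{P}^2_{\ddot{F},i}=\{00,01,10,11\}$ if $|\mathcal{P}^2_{F,i}|=4$; (ii) for any $s\in\mathcal{S}$, $\bar{\mathcal{P}}^2_{\ddot{F},i}(\ddot{f}_i(s))=\emptyset$ if $\bar{\mathcal{P}}^0_{F,i}(f_i(s))=\emptyset$, and $\bar{\mathcal{P}}^2_{\ddot{F},i}(\ddot{f}_i(s))=\{00\}$ if $\bar{\mathcal{P}}^0_{F,i}(f_i(s))\ne\emptyset$.
   Context: $\mathcal{S}$ is a finite source alphabet with $|\mathcal{S}|\ge 2$ and $\mathcal{C}=\{0,1\}$; $\mathcal{A}^k,\mathcal{A}^{\ast},\mathcal{A}^{+}$ are sequences of length $k$, finite, positive finite length; $\lambda$ empty sequence; $\preceq$ prefix, $\prec$ proper prefix; $\mathrm{suff}(x_1\cdots x_n)=x_2\cdots x_n$; $\bar{c}=1-c$ for $c\in\mathcal{C}$. A code-tuple $F$ with $m\ge1$ code tables consists of maps $f_i:\mathcal{S}\to\mathcal{C}^{\ast}$ and $\tau_i:\mathcal{S}\to\{0,\dots,m-1\}$, $i\in[F]=\{0,\dots,m-1\}$. $f_i^{\ast}(\lambda)=\lambda$, $f_i^{\ast}(\pmb{x})=f_i(x_1)f^{\ast}_{\tau_i(x_1)}(\mathrm{suff}(\pmb{x}))$. For integer $k\ge0$, $\pmb{b}\in\mathcal{C}^{\ast}$: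 $\mathcal{P}^k_{F,i}(\pmb{b})$ is the set of $\pmb{c}\in\mathcal{C}^k$ such that some $\pmb{x}=x_1\cdots x_n\in\mathcal{S}^{+}$ has $f_i^{\ast}(\pmb{x})\succeq\pmb{b}\pmb{c}$ and $f_i(x_1)\succeq\pmb{b}$; $\bar{\mathcal{P}}^k_{F,i}(\pmb{b})$ the same with $f_i(x_1)\succ\pmb{b}$; $\mathcal{P}^k_{F,i}=\mathcal{P}^k_{F,i}(\lambda)$. $F\in\mathscr{F}_{2\text{-}\mathrm{dec}}$ if $\mathcal{P}^2_{F,\tau_i(s)}\cap\bar{\mathcal{P}}^2_{F,i}(f_i(s))=\emptyset$ for all $i,s$, and $\mathcal{P}^2_{F,\tau_i(s)}\cap\mathcal{P}^2_{F,\tau_i(s')}=\emptyset$ whenever $s\ne s'$, $f_i(s)=f_i(s')$. Fix $\mu:\mathcal{S}\to(0,1]$ with $\sum_s\mu(s)=1$; $Q_{i,j}(F)=\sum_{s:\tau_i(s)=j}\mu(s)$; $F\in\mathscr{F}_{\mathrm{reg}}$ if $\pmb{\pi}Q(F)=\pmb{\pi}$, $\sum_i\pi_i=1$ has a unique solution. $\mathscr{F}_2=\{F\in\mathscr{F}_{\mathrm{reg}}\cap\mathscr{F}_{2\text{-}\mathrm{dec}}:|\mathcal{P}^2_{F,i}|\ge3\ \forall i\in[F]\}$ (every such $F$ satisfies $\mathcal{P}^1_{F,i}=\{0,1\}$ for all $i$). $\gamma$-decomposition: for $F\in\mathscr{F}_2$, $i\in[F]$, $s\in\mathcal{S}$,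 the symbols $s'$ with $f_i(s')\prec f_i(s)$ have pairwise distinct codewords; list them together with $s$ as $s_1,\dots,s_\rho$ with $s_\rho=s$ and $f_i(s_1)\prec\cdots\prec f_i(s_\rho)$; set $\gamma(s_1)=f_i(s_1)$ and $f_i(s_r)=f_i(s_{r-1})\gamma(s_r)$ for $r\ge2$. The code-tuple $\ddot{F}$ (with $|F|$ tables): $\ddot{\tau}_i=\tau_i$ and $\ddot{f}_i(s)=\ddot{\gamma}(s_1)\cdots\ddot{\gamma}(s_\rho)$ where, writing $\gamma(s_r)=g_1g_2\cdots g_l$: $\ddot{\gamma}(s_r)=\gamma(s_r)$ if $r=1$ and $|\mathcal{P}^2_{F,i}|=4$; $\ddot{\gamma}(s_r)=1$ if $r=1$, $|\mathcal{P}^2_{F,i}|=3$, $|\gamma(s_r)|=1$; $\ddot{\gamma}(s_r)=01g_3\cdots g_l$ if $r=1$, $|\mathcal{P}^2_{F,i}|=3$, $|\gamma(s_r)|\ge2$, $g_1\bar{g_2}\notin\mathcal{P}^2_{F,i}$; $\ddot{\gamma}(s_r)=1g_2g_3\cdots g_l$ if $r=1$, $|\mathcal{P}^2_{F,i}|=3$, $|\gamma(s_r)|\ge2$, $g_1\bar{g_2}\in\mathcal{P}^2_{F,i}$; $\ddot{\gamma}(s_r)=00g_3\cdots g_l$ if $r\ge2$. *)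

theory Defs
  imports Complex_Main "HOL-Library.Sublist"
begin

text \<open>Code symbols: False stands for 0, True for 1. A code-tuple is a record
  with the number of tables m, the code maps f_i and the transition maps tau_i.\<close>

record 'a code_tuple =
  ntab :: nat
  fm :: "nat \<Rightarrow> 'a \<Rightarrow> bool list"
  tm :: "nat \<Rightarrow> 'a \<Rightarrow> nat"

definition wf_ct :: "'a code_tuple \<Rightarrow> bool" where
  "wf_ct F \<longleftrightarrow> ntab F \<ge> 1 \<and> (\<forall>i<ntab F. \<forall>s. tm F i s < ntab F)"

fun fstar :: "'a code_tuple \<Rightarrow> nat \<Rightarrow> 'a list \<Rightarrow> bool list" where
  "fstar F i [] = []"
| "fstar F i (x # xs) = fm F i x @ fstar F (tm F i x) xs"

definition Pk :: "'a code_tuple \<Rightarrow> nat \<Rightarrow> nat \<Rightarrow> bool list \<Rightarrow> bool list set" where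
  "Pk F k i b = {c. length c = k \<and> (\<exists>x xs. prefix (b @ c) (fstar F i (x # xs))
                                        \<and> prefix b (fm F i x))}"

definition Pbar :: "'a code_tuple \<Rightarrow> nat \<Rightarrow> nat \<Rightarrow> bool list \<Rightarrow> bool list set" where
  "Pbar F k i b = {c. length c = k \<and> (\<exists>x xs. prefix (b @ c) (fstar F i (x # xs))
                                        \<and> strict_prefix b (fm F i x))}"

definition dec2 :: "'a code_tuple \<Rightarrow> bool" where
  "dec2 F \<longleftrightarrow> (\<forall>i<ntab F. \<forall>s.
       Pk F 2 (tm F i s) [] \<inter> Pbar F 2 i (fm F i s) = {}) \<and>
     (\<forall>i<ntab F. \<forall>s s'. s \<noteq> s' \<and> fm F i s = fm F i s' \<longrightarrow>
       Pk F 2 (tm F i s) [] \<inter> Pk F 2 (tm F i s') [] = {})"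

definition Qm :: "('a::finite \<Rightarrow> real) \<Rightarrow> 'a code_tuple \<Rightarrow> nat \<Rightarrow> nat \<Rightarrow> real" where
  "Qm \<mu> F i j = (\<Sum>s\<in>{s. tm F i s = j}. \<mu> s)"

definition stationary :: "('a::finite \<Rightarrow> real) \<Rightarrow> 'a code_tuple \<Rightarrow> (nat \<Rightarrow> real) \<Rightarrow> bool" where
  "stationary \<mu> F \<pi> \<longleftrightarrow> (\<forall>j<ntab F. (\<Sum>i<ntab F. \<pi> i * Qm \<mu> F i j) = \<pi> j)
                          \<and> (\<Sum>i<ntab F. \<pi> i) = 1"

definition regular :: "('a::finite \<Rightarrow> real) \<Rightarrow> 'a code_tuple \<Rightarrow> bool" where
  "regular \<mu> F \<longleftrightarrow> (\<exists>\<pi>. stationary \<mu> F \<pi> \<and>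
      (\<forall>\<pi>'. stationary \<mu> F \<pi>' \<longrightarrow> (\<forall>i<ntab F. \<pi>' i = \<pi> i)))"

definition F2 :: "('a::finite \<Rightarrow> real) \<Rightarrow> 'a code_tuple \<Rightarrow> bool" where
  "F2 \<mu> F \<longleftrightarrow> wf_ct F \<and> regular \<mu> F \<and> dec2 F \<and> (\<forall>i<ntab F. card (Pk F 2 i []) \<ge> 3)"

text \<open>gamma-decomposition: the lengths of the codewords f_i(s') that are proper
  prefixes of f_i(s), together with |f_i(s)|, sorted increasingly. The r-th
  (1-based) element s_r has codeword take (L!(r-1)) (f_i s).\<close>
definition chain_lens :: "'a code_tuple \<Rightarrow> nat \<Rightarrow> 'a \<Rightarrow> nat list" where
  "chain_lens F i s = sorted_list_of_set
     (insert (length (fm F i s)) {length (fm F i s') | s'. strict_prefix (fm F i s') (fm F i s)})"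

text \<open>gamma(s_r) for 0-based index r.\<close>
definition gamma :: "'a code_tuple \<Rightarrow> nat \<Rightarrow> 'a \<Rightarrow> nat \<Rightarrow> bool list" where
  "gamma F i s r = (let L = chain_lens F i s in
      if r = 0 then take (L ! 0) (fm F i s)
      else drop (L ! (r - 1)) (take (L ! r) (fm F i s)))"

text \<open>ddot gamma for 0-based index r (r = 0 is the paper's r = 1).
  (The empty-gamma case at r = 0 is not covered by the paper; we leave it unchanged.)\<close>
definition ddgamma :: "'a code_tuple \<Rightarrow> nat \<Rightarrow> nat \<Rightarrow> bool list \<Rightarrow> bool list" where
  "ddgamma F i r g =
     (if r = 0 then
        (if card (Pk F 2 i []) = 4 then g
         else if length g = 1 then [True]
         else if length g \<ge> 2 then
           (if [g ! 0, \<not> (g ! 1)] \<notin> Pk F 2 i [] then [False, True] @ drop 2 g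
            else True # drop 1 g)
         else g)
      else [False, False] @ drop 2 g)"

definition ddf :: "'a code_tuple \<Rightarrow> nat \<Rightarrow> 'a \<Rightarrow> bool list" where
  "ddf F i s = concat (map (\<lambda>r. ddgamma F i r (gamma F i s r))
                          [0..<length (chain_lens F i s)])"

definition ddF :: "'a code_tuple \<Rightarrow> 'a code_tuple" where
  "ddF F = \<lparr>ntab = ntab F, fm = ddf F, tm = tm F\<rparr>"

end

theory Submission
  imports Defs
begin

(* Each P^2_{F,j} misses at most one of the four two-bit words, so any two of them meet.  By
   2-decodability every f_j is therefore injective and every \bar P^2_{F,j}(f_j(s)) has at most one
   element: a codeword that is a proper prefix of another one is followed by at least two more
   bits, and by the same two bits in all of its extensions.  Moreover an empty codeword f_j(a)
   forces |P^2_{F,j}| = 4 and |P^2_{F,tau_j(a)}| = 3.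

   Hence \ddot f acts bitwise: \ddot f_j(s) arises from f_j(s) by clearing the two bits after each
   codeword that is a proper prefix of f_j(s) and, when |P^2_{F,j}| = 3, recoding the first two
   bits as (g, e) |-> (1, e) if g is followed by both bits in P^2_{F,j} and as (0, 1) otherwise.
   Each new bit depends only on the old bits up to it, and at the first position where two
   codewords differ the new bits differ as well.  So \ddot f_j(s) is a proper prefix of
   \ddot f_j(x) iff f_j(s) is one of f_j(x), and then \ddot f_j(x) continues \ddot f_j(s) with 00;
   this is (ii).  For (i) one reads off the first two bits of the new codewords, following an
   empty codeword f_j(a) into table tau_j(a). *)

lemma prefix_nth: "prefix xs ys \<Longrightarrow> i < length xs \<Longrightarrow> xs ! i = ys ! i"
  by (auto simp: prefix_def nth_append)

lemma prefix_same_length_eq: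
  "prefix xs zs \<Longrightarrow> prefix ys zs \<Longrightarrow> length xs = length ys \<Longrightarrow> xs = ys"
  by (metis order_refl prefix_length_prefix prefix_order.antisym)

lemma sorted_list_of_set_insert_greatest:
  assumes "finite A" "\<forall>b\<in>A. b < (a::'a::linorder)"
  shows "sorted_list_of_set (insert a A) = sorted_list_of_set A @ [a]"
  using assms
  by (subst sorted_list_of_set_unique[symmetric])
     (auto simp: sorted_wrt_append card_insert_if)

definition two_bit_words :: "bool list set" where
  "two_bit_words = {c. length c = 2}"

lemma two_bit_words_eq:
  "two_bit_words = {[False, False], [False, True], [True, False], [True, True]}"
proof (intro equalityI subsetI)
  fix c assume "c \<in> two_bit_words"
  then obtain a b where "c = [a, b]"
    by (auto simp: two_bit_words_def numeral_2_eq_2 length_Suc_conv)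
  then show "c \<in> {[False, False], [False, True], [True, False], [True, True]}"
    by (cases a; cases b) simp_all
qed (auto simp: two_bit_words_def)

lemma card_two_bit_words: "card two_bit_words = 4"
  by (simp add: two_bit_words_eq)

lemma finite_two_bit_words: "finite two_bit_words"
  by (simp add: two_bit_words_eq)

lemma two_bit_words_card_ge_3_cases:
  assumes "A \<subseteq> two_bit_words" "3 \<le> card A"
  obtains "A = two_bit_words" "card A = 4"
  | c where "c \<in> two_bit_words" "A = two_bit_words - {c}" "card A = 3"
proof (cases "two_bit_words \<subseteq> A")
  case True
  with assms(1) that(1) show ?thesis
    by (simp add: card_two_bit_words subset_antisym)
next
  case False
  then obtain c where c: "c \<in> two_bit_words" "c \<notin> A" by blast
  have card: "card (two_bit_words - {c}) = 3"
    using c by (simp add: finite_two_bit_words card_two_bit_words)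
  have "A = two_bit_words - {c}"
    using assms c card by (intro card_seteq) (auto simp: finite_two_bit_words)
  with c card that(2) show ?thesis by simp
qed

lemma two_bit_words_subsets_meet:
  assumes "A \<subseteq> two_bit_words" "B \<subseteq> two_bit_words" "3 \<le> card A" "3 \<le> card B"
  shows "A \<inter> B \<noteq> {}"
proof
  assume disjoint: "A \<inter> B = {}"
  have "finite A" "finite B"
    using assms(1,2) finite_subset finite_two_bit_words by blast+
  with disjoint have "card (A \<union> B) = card A + card B" by (simp add: card_Un_disjoint)
  moreover have "card (A \<union> B) \<le> card two_bit_words"
    using assms(1,2) by (intro card_mono) (auto simp: finite_two_bit_words)
  ultimately show False using assms(3,4) by (simp add: card_two_bit_words)
qed

definition is_code_prefix :: "'a code_tuple \<Rightarrow> nat \<Rightarrow> bool list \<Rightarrow> bool" where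
  "is_code_prefix G j c \<longleftrightarrow> (\<exists>x xs. prefix c (fstar G j (x # xs)))"

lemma Pk_Nil_eq: "Pk G k j [] = {c. length c = k \<and> is_code_prefix G j c}"
  by (simp add: Pk_def is_code_prefix_def)

lemma Pk_two_subset: "Pk G 2 j [] \<subseteq> two_bit_words"
  by (auto simp: Pk_Nil_eq two_bit_words_def)

lemma is_code_prefix_prefix: "prefix c d \<Longrightarrow> is_code_prefix G j d \<Longrightarrow> is_code_prefix G j c"
  unfolding is_code_prefix_def by (metis prefix_order.trans)

lemma is_code_prefix_codeword: "prefix c (fm G j x) \<Longrightarrow> is_code_prefix G j c"
  unfolding is_code_prefix_def by (auto intro!: exI[of _ x] exI[of _ "[]"])

lemma is_code_prefix_append:
  "is_code_prefix G (tm G j x) c \<Longrightarrow> is_code_prefix G j (fm G j x @ c)"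
  unfolding is_code_prefix_def by (metis fstar.simps(2) same_prefix_prefix)

lemma take_two_codeword_in_Pk: "2 \<le> length (fm G j x) \<Longrightarrow> take 2 (fm G j x) \<in> Pk G 2 j []"
  by (simp add: Pk_Nil_eq is_code_prefix_codeword[OF take_is_prefix])

lemma Pbar_memI:
  assumes "strict_prefix b (fm G j x)" "prefix (b @ c) (fm G j x @ w)"
    and "is_code_prefix G (tm G j x) w" "length c = k"
  shows "c \<in> Pbar G k j b"
proof -
  obtain y ys where "prefix w (fstar G (tm G j x) (y # ys))"
    using assms(3) by (auto simp: is_code_prefix_def)
  then have "prefix (b @ c) (fstar G j (x # y # ys))"
    using assms(2) by (auto intro: prefix_order.trans)
  with assms(1,4) show ?thesis unfolding Pbar_def by blast
qed

lemma Pbar_zero: "Pbar G 0 j b = (if \<exists>x. strict_prefix b (fm G j x) then {[]} else {})"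
  by (auto simp: Pbar_def strict_prefix_def intro!: exI[of _ "[]"])

lemma fm_ddF [simp]: "fm (ddF F) = ddf F"
  and tm_ddF [simp]: "tm (ddF F) = tm F"
  by (simp_all add: ddF_def)

section \<open>The chain of prefix codewords\<close>

lemma finite_codeword_prefix_lengths:
  "finite {length (fm F j y) |y. strict_prefix (fm F j y) u}"
  by (rule finite_subset[of _ "{..<length u}"]) (auto simp: prefix_length_less)

lemma chain_lens_eq:
  "chain_lens F j s = sorted_list_of_set {length (fm F j y) |y. strict_prefix (fm F j y) (fm F j s)}
     @ [length (fm F j s)]"
  unfolding chain_lens_def
  by (rule sorted_list_of_set_insert_greatest)
     (auto simp: finite_codeword_prefix_lengths prefix_length_less)

lemma ddf_no_codeword_prefix:
  "\<forall>y. \<not> strict_prefix (fm F j y) (fm F j s) \<Longrightarrow> ddf F j s = ddgamma F j 0 (fm F j s)"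
  by (simp add: ddf_def chain_lens_def gamma_def)

lemma chain_lens_longest_codeword_prefix:
  assumes sp: "strict_prefix (fm F j s') (fm F j s)"
    and longest: "\<forall>y. strict_prefix (fm F j y) (fm F j s) \<longrightarrow> length (fm F j y) \<le> length (fm F j s')"
  shows "chain_lens F j s = chain_lens F j s' @ [length (fm F j s)]"
proof -
  define A where "A u = {length (fm F j y) |y. strict_prefix (fm F j y) u}" for u
  have "A (fm F j s) = insert (length (fm F j s')) (A (fm F j s'))"
  proof (intro equalityI subsetI)
    fix n assume "n \<in> A (fm F j s)"
    then obtain y where y: "n = length (fm F j y)" "strict_prefix (fm F j y) (fm F j s)"
      by (auto simp: A_def)
    show "n \<in> insert (length (fm F j s')) (A (fm F j s'))"
    proof (cases "n = length (fm F j s')")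
      case False
      with y longest have "length (fm F j y) < length (fm F j s')" by force
      moreover have "prefix (fm F j y) (fm F j s')"
        using y sp longest prefix_length_prefix by (metis strict_prefix_def)
      ultimately show ?thesis using y by (auto simp: A_def strict_prefix_def)
    qed simp
  next
    fix n assume "n \<in> insert (length (fm F j s')) (A (fm F j s'))"
    then show "n \<in> A (fm F j s)"
      using sp prefix_order.less_trans by (auto simp: A_def)
  qed
  then show ?thesis
    using chain_lens_eq[of F j s] by (simp add: A_def chain_lens_def)
qed

lemma ddf_longest_codeword_prefix:
  assumes sp: "strict_prefix (fm F j s') (fm F j s)"
    and longest: "\<forall>y. strict_prefix (fm F j y) (fm F j s) \<longrightarrow> length (fm F j y) \<le> length (fm F j s')"
  shows "ddf F j s = ddf F j s' @ [False, False] @ drop (length (fm F j s') + 2) (fm F j s)"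
proof -
  define L where "L = chain_lens F j s'"
  define n where "n = length L"
  obtain t where s: "fm F j s = fm F j s' @ t"
    using sp by (auto simp: strict_prefix_def prefix_def)
  have L_s: "chain_lens F j s = L @ [length (fm F j s)]"
    using chain_lens_longest_codeword_prefix[OF sp longest] by (simp add: L_def)
  have "0 < n" and L_last: "L ! (n - 1) = length (fm F j s')"
    using chain_lens_eq[of F j s'] by (simp_all add: L_def n_def nth_append)
  have L_le: "L ! r \<le> length (fm F j s')" if "r < n" for r
  proof -
    have "L ! r \<in> set L" using that by (simp add: n_def)
    then show ?thesis
      using chain_lens_eq[of F j s'] finite_codeword_prefix_lengths[of F j "fm F j s'"]
      by (auto simp: L_def dest: prefix_length_less)
  qed
  have gamma_eq: "gamma F j s r = gamma F j s' r" if "r < n" for r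
  proof -
    have "take (L ! r) (fm F j s) = take (L ! r) (fm F j s')"
      using s L_le[OF that] by simp
    with that L_s show ?thesis
      by (cases r) (simp_all add: gamma_def Let_def L_def n_def nth_append)
  qed
  have "ddf F j s = concat (map (\<lambda>r. ddgamma F j r (gamma F j s r)) [0..<n]) @ ddgamma F j n (gamma F j s n)"
    by (simp add: ddf_def L_s n_def)
  also have "map (\<lambda>r. ddgamma F j r (gamma F j s r)) [0..<n] =
      map (\<lambda>r. ddgamma F j r (gamma F j s' r)) [0..<n]"
    by (rule map_cong) (simp_all add: gamma_eq)
  also have "concat \<dots> = ddf F j s'"
    by (simp add: ddf_def L_def n_def)
  also have "gamma F j s n = t"
    using L_s L_last \<open>0 < n\<close> s by (simp add: gamma_def nth_append n_def)
  finally show ?thesis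
    using \<open>0 < n\<close> s by (simp add: ddgamma_def)
qed

section \<open>A bitwise description of the transformed code\<close>

definition branching :: "'a code_tuple \<Rightarrow> nat \<Rightarrow> bool \<Rightarrow> bool" where
  "branching F j g \<longleftrightarrow> [g, False] \<in> Pk F 2 j [] \<and> [g, True] \<in> Pk F 2 j []"

fun recode_head :: "(bool \<Rightarrow> bool) \<Rightarrow> bool list \<Rightarrow> bool list" where
  "recode_head br [] = []"
| "recode_head br [a] = [br a]"
| "recode_head br (a # b # w) = br a # (\<not> br a \<or> b) # w"

lemma length_recode_head [simp]: "length (recode_head br u) = length u"
  by (induction br u rule: recode_head.induct) simp_all

lemma nth_recode_head:
  "p < length u \<Longrightarrow> recode_head br u ! p =
     (if p = 0 then br (u ! 0) else if p = 1 then \<not> br (u ! 0) \<or> u ! 1 else u ! p)"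
  by (cases "(br, u)" rule: recode_head.cases) (auto simp: nth_Cons')

definition head_code :: "'a code_tuple \<Rightarrow> nat \<Rightarrow> bool list \<Rightarrow> bool list" where
  "head_code F j u = (if card (Pk F 2 j []) = 3 then recode_head (branching F j) u else u)"

definition after_codeword :: "'a code_tuple \<Rightarrow> nat \<Rightarrow> bool list \<Rightarrow> nat \<Rightarrow> bool" where
  "after_codeword F j u p \<longleftrightarrow>
     (\<exists>y. strict_prefix (fm F j y) u \<and> length (fm F j y) \<le> p \<and> p < length (fm F j y) + 2)"

definition ddbit :: "'a code_tuple \<Rightarrow> nat \<Rightarrow> bool list \<Rightarrow> nat \<Rightarrow> bool" where
  "ddbit F j u p \<longleftrightarrow> \<not> after_codeword F j u p \<and> head_code F j u ! p"

definition ddword :: "'a code_tuple \<Rightarrow> nat \<Rightarrow> bool list \<Rightarrow> bool list" where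
  "ddword F j u = map (ddbit F j u) [0..<length u]"

lemma length_head_code [simp]: "length (head_code F j u) = length u"
  by (simp add: head_code_def)

lemma length_ddword [simp]: "length (ddword F j u) = length u"
  by (simp add: ddword_def)

lemma nth_ddword: "p < length u \<Longrightarrow> ddword F j u ! p = ddbit F j u p"
  by (simp add: ddword_def)

lemma nth_head_code_prefix:
  assumes "prefix u v" "p < length u"
  shows "head_code F j u ! p = head_code F j v ! p"
proof -
  have "u ! k = v ! k" if "k \<le> p" for k
    using assms that by (intro prefix_nth) auto
  moreover have "p < length v" using assms prefix_length_le by fastforce
  ultimately show ?thesis using assms(2) by (simp add: head_code_def nth_recode_head)
qed

lemma after_codeword_prefix:
  assumes "prefix u v" "p < length u"
  shows "after_codeword F j u p \<longleftrightarrow> after_codeword F j v p"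
proof -
  have "strict_prefix c u \<longleftrightarrow> strict_prefix c v" if "length c \<le> p" for c :: "bool list"
  proof
    assume "strict_prefix c u"
    then show "strict_prefix c v" using assms(1) by (rule prefix_order.less_le_trans)
  next
    assume "strict_prefix c v"
    then have "prefix c u"
      using assms that prefix_length_prefix[of c v u] by (simp add: strict_prefix_def)
    moreover have "c \<noteq> u" using assms(2) that by auto
    ultimately show "strict_prefix c u" by (simp add: strict_prefix_def)
  qed
  then show ?thesis unfolding after_codeword_def by blast
qed

lemma ddbit_prefix: "prefix u v \<Longrightarrow> p < length u \<Longrightarrow> ddbit F j u p = ddbit F j v p"
  by (simp add: ddbit_def after_codeword_prefix nth_head_code_prefix)

lemma ddword_prefix_append:
  assumes "prefix u v"
  shows "ddword F j v = ddword F j u @ map (ddbit F j v) [length u..<length v]"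
proof -
  have "[0..<length v] = [0..<length u] @ [length u..<length v]"
    using prefix_length_le[OF assms] upt_add_eq_append[of 0 "length u" "length v - length u"]
    by simp
  moreover have "map (ddbit F j v) [0..<length u] = ddword F j u"
    by (simp add: ddword_def ddbit_prefix[OF assms])
  ultimately show ?thesis by (simp add: ddword_def)
qed

lemma prefix_ddword: "prefix u v \<Longrightarrow> prefix (ddword F j u) (ddword F j v)"
  by (simp add: ddword_prefix_append)

lemma ddword_eq_head_code:
  "\<forall>p<length u. \<not> after_codeword F j u p \<Longrightarrow> ddword F j u = head_code F j u"
  by (intro nth_equalityI) (simp_all add: ddword_def ddbit_def)

lemma after_codeword_0: "after_codeword F j u 0 \<Longrightarrow> \<exists>y. fm F j y = []"
  by (auto simp: after_codeword_def)

lemma after_codeword_1: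
  assumes "after_codeword F j u 1"
  shows "\<exists>y. fm F j y = [] \<or> fm F j y = [u ! 0]"
proof -
  obtain y where y: "strict_prefix (fm F j y) u" "length (fm F j y) \<le> 1"
    using assms by (auto simp: after_codeword_def)
  then show ?thesis
    by (cases "fm F j y") (auto simp: strict_prefix_def prefix_def)
qed

locale F2_tuple =
  fixes F :: "'a code_tuple"
  assumes wf: "wf_ct F" and dec: "dec2 F"
    and card_Pk_ge_3: "\<And>j. j < ntab F \<Longrightarrow> 3 \<le> card (Pk F 2 j [])"
    and two_symbols: "\<exists>s s' :: 'a. s \<noteq> s'"
begin

lemma tm_less: "j < ntab F \<Longrightarrow> tm F j s < ntab F"
  using wf by (auto simp: wf_ct_def)

lemmas Pk_cases = two_bit_words_card_ge_3_cases[OF Pk_two_subset card_Pk_ge_3]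

lemma card_Pk_3_or_4: "j < ntab F \<Longrightarrow> card (Pk F 2 j []) = 3 \<or> card (Pk F 2 j []) = 4"
  by (rule Pk_cases) auto

lemma is_code_prefix_single:
  assumes "j < ntab F"
  shows "is_code_prefix F j [g]"
proof -
  have "[g, False] \<in> Pk F 2 j [] \<or> [g, True] \<in> Pk F 2 j []"
    by (rule Pk_cases[OF assms]) (auto simp: two_bit_words_def)
  then show ?thesis
    by (auto simp: Pk_Nil_eq intro: is_code_prefix_prefix[rotated])
qed

lemma inj_fm:
  assumes j: "j < ntab F"
  shows "inj (fm F j)"
proof (rule injI, rule ccontr)
  fix s s' assume "fm F j s = fm F j s'" "s \<noteq> s'"
  with dec j have "Pk F 2 (tm F j s) [] \<inter> Pk F 2 (tm F j s') [] = {}"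
    unfolding dec2_def by blast
  then show False
    using two_bit_words_subsets_meet[OF Pk_two_subset Pk_two_subset
        card_Pk_ge_3[OF tm_less[OF j]] card_Pk_ge_3[OF tm_less[OF j]]] by blast
qed

lemma Pbar_two_unique:
  assumes j: "j < ntab F"
    and c: "c \<in> Pbar F 2 j (fm F j s)" and c': "c' \<in> Pbar F 2 j (fm F j s)"
  shows "c = c'"
proof -
  have "c \<notin> Pk F 2 (tm F j s) []" "c' \<notin> Pk F 2 (tm F j s) []"
    using dec j c c' unfolding dec2_def by blast+
  moreover have "c \<in> two_bit_words" "c' \<in> two_bit_words"
    using c c' by (auto simp: Pbar_def two_bit_words_def)
  ultimately show ?thesis
    by (cases rule: Pk_cases[OF tm_less[OF j]]) auto
qed

lemma codeword_prefix_gap: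
  assumes j: "j < ntab F" and sp: "strict_prefix (fm F j s) (fm F j x)"
  shows "length (fm F j s) + 2 \<le> length (fm F j x)"
proof (rule ccontr)
  assume short: "\<not> ?thesis"
  obtain t where x: "fm F j x = fm F j s @ t" and "t \<noteq> []"
    using sp by (auto simp: strict_prefix_def prefix_def)
  then have "0 < length t" by simp
  moreover have "length (fm F j x) = length (fm F j s) + length t" using x by simp
  ultimately have "length t = 1" using short by linarith
  with x obtain g where x_eq: "fm F j x = fm F j s @ [g]"
    by (cases t) auto
  have "[g, d] \<in> Pbar F 2 j (fm F j s)" for d
    using sp is_code_prefix_single[OF tm_less[OF j]]
    by (intro Pbar_memI[where x = x and w = "[d]"]) (simp_all add: x_eq)
  from Pbar_two_unique[OF j this[of False] this[of True]] show False by simp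
qed

lemma codeword_extensions_agree:
  assumes j: "j < ntab F"
    and x: "strict_prefix (fm F j s) (fm F j x)" and y: "strict_prefix (fm F j s) (fm F j y)"
  shows "take (length (fm F j s) + 2) (fm F j x) = take (length (fm F j s) + 2) (fm F j y)"
proof -
  let ?m = "length (fm F j s)"
  have split: "take (?m + 2) (fm F j z) = fm F j s @ take 2 (drop ?m (fm F j z))"
    if "strict_prefix (fm F j s) (fm F j z)" for z
    using that by (auto simp: strict_prefix_def prefix_def take_add)
  have next_two: "take 2 (drop ?m (fm F j z)) \<in> Pbar F 2 j (fm F j s)"
    if z: "strict_prefix (fm F j s) (fm F j z)" for z
  proof (rule Pbar_memI[OF z, where w = "[]"])
    show "prefix (fm F j s @ take 2 (drop ?m (fm F j z))) (fm F j z @ [])"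
      using split[OF z] by (metis append_Nil2 take_is_prefix)
    show "length (take 2 (drop ?m (fm F j z))) = 2"
      using codeword_prefix_gap[OF j z] by simp
  qed (simp add: is_code_prefix_def)
  have "take 2 (drop ?m (fm F j x)) = take 2 (drop ?m (fm F j y))"
    by (rule Pbar_two_unique[OF j next_two[OF x] next_two[OF y]])
  then show ?thesis unfolding split[OF x] split[OF y] by simp
qed

lemma branching_single_codeword:
  assumes j: "j < ntab F" and x: "fm F j x = [g]"
  shows "branching F j g"
  using is_code_prefix_append[of F j x, OF is_code_prefix_single[OF tm_less[OF j]]] x
  by (simp add: branching_def Pk_Nil_eq)

lemma empty_codeword_strict_prefix:
  assumes j: "j < ntab F" and a: "fm F j a = []"
  obtains x where "strict_prefix (fm F j a) (fm F j x)"
proof -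
  obtain s1 s2 :: 'a where "s1 \<noteq> s2" using two_symbols by blast
  define x where "x = (if s1 = a then s2 else s1)"
  with \<open>s1 \<noteq> s2\<close> have "x \<noteq> a" by auto
  with inj_fm[OF j] a have "fm F j x \<noteq> []" by (metis injD)
  with a show ?thesis by (intro that[of x]) (simp add: strict_prefix_def)
qed

lemma empty_codeword_card:
  assumes j: "j < ntab F" and a: "fm F j a = []"
  shows "card (Pk F 2 j []) = 4" "card (Pk F 2 (tm F j a) []) = 3"
proof -
  obtain x where sp: "strict_prefix (fm F j a) (fm F j x)"
    using empty_codeword_strict_prefix[OF j a] .
  let ?c = "take 2 (fm F j x)"
  have two: "2 \<le> length (fm F j x)" using codeword_prefix_gap[OF j sp] a by simp
  have "?c \<in> Pbar F 2 j (fm F j a)"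
    using sp two a by (intro Pbar_memI[where w = "[]"]) (auto simp: is_code_prefix_def take_is_prefix)
  then have c_notin: "?c \<notin> Pk F 2 (tm F j a) []"
    using dec j unfolding dec2_def by blast
  have "Pk F 2 (tm F j a) [] \<subseteq> Pk F 2 j []"
    using is_code_prefix_append[of F j a] a by (auto simp: Pk_Nil_eq)
  then have "insert ?c (Pk F 2 (tm F j a) []) \<subseteq> Pk F 2 j []"
    using take_two_codeword_in_Pk[OF two] by blast
  then have "card (insert ?c (Pk F 2 (tm F j a) [])) \<le> card (Pk F 2 j [])"
    by (intro card_mono) (auto intro: finite_subset[OF Pk_two_subset finite_two_bit_words])
  moreover have "card (insert ?c (Pk F 2 (tm F j a) [])) = card (Pk F 2 (tm F j a) []) + 1"
    using card_insert_disjoint[OF finite_subset[OF Pk_two_subset finite_two_bit_words] c_notin]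
    by simp
  moreover have "card (Pk F 2 j []) \<le> 4"
    using card_mono[OF finite_two_bit_words Pk_two_subset] by (simp add: card_two_bit_words)
  moreover have "3 \<le> card (Pk F 2 (tm F j a) [])"
    using card_Pk_ge_3[OF tm_less[OF j]] .
  ultimately show "card (Pk F 2 j []) = 4" "card (Pk F 2 (tm F j a) []) = 3" by linarith+
qed

lemma fm_nonempty_card_3: "j < ntab F \<Longrightarrow> card (Pk F 2 j []) = 3 \<Longrightarrow> fm F j x \<noteq> []"
  using empty_codeword_card(1) by fastforce

lemma Pk_card_3_eq:
  assumes "j < ntab F" "card (Pk F 2 j []) = 3"
  obtains a e where "Pk F 2 j [] = two_bit_words - {[a, e]}"
  using assms by (cases rule: Pk_cases) (auto simp: two_bit_words_eq)

lemma branching_card_3: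
  assumes "j < ntab F" "card (Pk F 2 j []) = 3"
  shows "\<exists>a. \<forall>g. branching F j g \<longleftrightarrow> g \<noteq> a"
proof -
  obtain a e where "Pk F 2 j [] = two_bit_words - {[a, e]}"
    using Pk_card_3_eq[OF assms] .
  then show ?thesis by (auto simp: branching_def two_bit_words_def)
qed

lemma ddgamma_zero_eq_head_code:
  assumes j: "j < ntab F"
  shows "ddgamma F j 0 (fm F j s) = head_code F j (fm F j s)"
proof (cases "card (Pk F 2 j []) = 4")
  case True
  then show ?thesis by (simp add: ddgamma_def head_code_def)
next
  case False
  with card_Pk_3_or_4[OF j] have card3: "card (Pk F 2 j []) = 3" by simp
  show ?thesis
  proof (cases "fm F j s" rule: remdups_adj.cases)
    case (2 a)
    then show ?thesis
      using branching_single_codeword[OF j] card3 by (simp add: ddgamma_def head_code_def)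
  next
    case (3 a b w)
    then have "[a, b] \<in> Pk F 2 j []"
      using take_two_codeword_in_Pk[of F j s] by simp
    then have "branching F j a \<longleftrightarrow> [a, \<not> b] \<in> Pk F 2 j []"
      by (cases b) (auto simp: branching_def)
    with 3 card3 show ?thesis by (simp add: ddgamma_def head_code_def)
  qed (simp_all add: ddgamma_def head_code_def)
qed

lemma ddword_longest_codeword_prefix:
  assumes j: "j < ntab F" and sp: "strict_prefix (fm F j s') (fm F j s)"
    and longest: "\<forall>y. strict_prefix (fm F j y) (fm F j s) \<longrightarrow> length (fm F j y) \<le> length (fm F j s')"
  shows "ddword F j (fm F j s) =
           ddword F j (fm F j s') @ [False, False] @ drop (length (fm F j s') + 2) (fm F j s)"
proof -
  let ?m = "length (fm F j s')" and ?w = "fm F j s"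
  have gap: "?m + 2 \<le> length ?w" using codeword_prefix_gap[OF j sp] .
  have map_eq: "map (ddbit F j ?w) [?m..<length ?w] = [False, False] @ drop (?m + 2) ?w"
  proof (rule nth_equalityI)
    fix k assume "k < length (map (ddbit F j ?w) [?m..<length ?w])"
    then have k: "?m + k < length ?w" by simp
    show "map (ddbit F j ?w) [?m..<length ?w] ! k = ([False, False] @ drop (?m + 2) ?w) ! k"
    proof (cases "k < 2")
      case True
      then have "after_codeword F j ?w (?m + k)"
        using sp by (auto simp: after_codeword_def)
      with True k show ?thesis by (auto simp: ddbit_def nth_append nth_Cons')
    next
      case False
      then have "\<not> after_codeword F j ?w (?m + k)"
        using longest by (force simp: after_codeword_def)
      moreover have "([False, False] @ drop (?m + 2) ?w) ! k = ?w ! (?m + k)"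
      proof -
        have "([False, False] @ drop (?m + 2) ?w) ! k = drop (?m + 2) ?w ! (k - 2)"
          using False by (simp add: nth_append numeral_2_eq_2)
        also have "\<dots> = ?w ! (?m + 2 + (k - 2))"
          using gap by simp
        also have "?m + 2 + (k - 2) = ?m + k"
          using False by simp
        finally show ?thesis .
      qed
      ultimately show ?thesis
        using False k by (simp add: ddbit_def head_code_def nth_recode_head)
    qed
  qed (use gap in simp)
  have "prefix (fm F j s') ?w" using sp by (simp add: strict_prefix_def)
  then have "ddword F j ?w = ddword F j (fm F j s') @ map (ddbit F j ?w) [?m..<length ?w]"
    by (rule ddword_prefix_append)
  with map_eq show ?thesis by simp
qed

theorem ddf_eq_ddword:
  assumes j: "j < ntab F"
  shows "ddf F j s = ddword F j (fm F j s)"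
proof (induction "length (fm F j s)" arbitrary: s rule: less_induct)
  case less
  show ?case
  proof (cases "\<exists>y. strict_prefix (fm F j y) (fm F j s)")
    case False
    then have "\<forall>p. \<not> after_codeword F j (fm F j s) p" by (auto simp: after_codeword_def)
    with False show ?thesis
      by (simp add: ddf_no_codeword_prefix ddgamma_zero_eq_head_code[OF j] ddword_eq_head_code)
  next
    case True
    then obtain y where "strict_prefix (fm F j y) (fm F j s)" ..
    then obtain s' where sp: "strict_prefix (fm F j s') (fm F j s)"
      and longest: "\<forall>y. strict_prefix (fm F j y) (fm F j s) \<longrightarrow> length (fm F j y) \<le> length (fm F j s')"
      using ex_has_greatest_nat[where P = "\<lambda>y. strict_prefix (fm F j y) (fm F j s)"
          and f = "\<lambda>y. length (fm F j y)" and b = "length (fm F j s)"]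
      by (auto dest: prefix_length_less)
    have "ddf F j s' = ddword F j (fm F j s')"
      using less prefix_length_less[OF sp] by blast
    with ddf_longest_codeword_prefix[OF sp longest] ddword_longest_codeword_prefix[OF j sp longest]
    show ?thesis by simp
  qed
qed

lemma length_ddf: "j < ntab F \<Longrightarrow> length (ddf F j s) = length (fm F j s)"
  by (simp add: ddf_eq_ddword)

section \<open>Proper prefixes in the transformed code\<close>

lemma not_after_codeword_first_difference:
  assumes j: "j < ntab F" and s: "fm F j s = v @ b # w" and x: "fm F j x = v @ c # w'"
    and "b \<noteq> c"
  shows "\<not> after_codeword F j (fm F j s) (length v)"
proof
  assume "after_codeword F j (fm F j s) (length v)"
  then obtain y where y: "strict_prefix (fm F j y) (fm F j s)"
    and le: "length (fm F j y) \<le> length v" and less: "length v < length (fm F j y) + 2"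
    by (auto simp: after_codeword_def)
  have "prefix (fm F j y) v"
    using y le s prefix_length_prefix[of "fm F j y" "fm F j s" v] by (simp add: strict_prefix_def)
  then have "strict_prefix (fm F j y) (fm F j x)"
    using x by (auto simp: strict_prefix_def prefix_def)
  then have "take (length (fm F j y) + 2) (fm F j s) ! length v = take (length (fm F j y) + 2) (fm F j x) ! length v"
    using codeword_extensions_agree[OF j y] by simp
  with less s x \<open>b \<noteq> c\<close> show False by (simp add: nth_append take_Cons')
qed

lemma ddbit_first_difference:
  assumes j: "j < ntab F" and s: "fm F j s = v @ b # w" and x: "fm F j x = v @ c # w'"
    and "b \<noteq> c"
  shows "ddbit F j (fm F j s) (length v) \<noteq> ddbit F j (fm F j x) (length v)"
proof -
  have "head_code F j (fm F j s) ! length v \<noteq> head_code F j (fm F j x) ! length v"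
  proof (cases "card (Pk F 2 j []) = 3")
    case False
    with s x \<open>b \<noteq> c\<close> show ?thesis by (simp add: head_code_def)
  next
    case True
    obtain a where br: "\<And>g. branching F j g \<longleftrightarrow> g \<noteq> a"
      using branching_card_3[OF j True] by blast
    consider "v = []" | v0 where "v = [v0]" | "2 \<le> length v"
      by (cases v rule: remdups_adj.cases) auto
    then show ?thesis
    proof cases
      case 1
      with s x \<open>b \<noteq> c\<close> True show ?thesis by (auto simp: head_code_def nth_recode_head br)
    next
      case (2 v0)
      have "[v0, b] \<in> Pk F 2 j []" "[v0, c] \<in> Pk F 2 j []"
        using take_two_codeword_in_Pk[of F j s] take_two_codeword_in_Pk[of F j x] s x 2 by simp_all
      with \<open>b \<noteq> c\<close> have "branching F j v0" by (cases b) (auto simp: branching_def)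
      with s x \<open>b \<noteq> c\<close> True 2 show ?thesis by (simp add: head_code_def nth_recode_head)
    next
      case 3
      then have "v \<noteq> []" "length v \<noteq> 1" by auto
      with s x \<open>b \<noteq> c\<close> True show ?thesis by (simp add: head_code_def nth_recode_head nth_append)
    qed
  qed
  moreover have "\<not> after_codeword F j (fm F j s) (length v)"
    using s x \<open>b \<noteq> c\<close> by (rule not_after_codeword_first_difference[OF j])
  moreover have "\<not> after_codeword F j (fm F j x) (length v)"
    using x s \<open>b \<noteq> c\<close>[symmetric] by (rule not_after_codeword_first_difference[OF j])
  ultimately show ?thesis by (simp add: ddbit_def)
qed

lemma ddf_strict_prefix_extends:
  assumes j: "j < ntab F" and sp: "strict_prefix (fm F j s) (fm F j x)"
  shows "prefix (ddf F j s @ [False, False]) (ddf F j x)"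
proof -
  let ?m = "length (fm F j s)" and ?v = "fm F j x"
  have "prefix (fm F j s) ?v" using sp by (simp add: strict_prefix_def)
  then have "ddword F j ?v = ddword F j (fm F j s) @ map (ddbit F j ?v) [?m..<length ?v]"
    by (rule ddword_prefix_append)
  also have "[?m..<length ?v] = ?m # Suc ?m # [?m + 2..<length ?v]"
    using codeword_prefix_gap[OF j sp] by (simp add: upt_conv_Cons)
  also have "after_codeword F j ?v ?m" "after_codeword F j ?v (Suc ?m)"
    using sp by (auto simp: after_codeword_def)
  ultimately have "ddword F j ?v = ddword F j (fm F j s) @ False # False # map (ddbit F j ?v) [?m + 2..<length ?v]"
    by (simp add: ddbit_def)
  then show ?thesis by (simp add: ddf_eq_ddword[OF j])
qed

lemma ddf_strict_prefix_iff:
  assumes j: "j < ntab F"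
  shows "strict_prefix (ddf F j s) (ddf F j x) \<longleftrightarrow> strict_prefix (fm F j s) (fm F j x)"
proof
  assume "strict_prefix (fm F j s) (fm F j x)"
  from ddf_strict_prefix_extends[OF j this]
  obtain r where "ddf F j x = (ddf F j s @ [False, False]) @ r" by (rule prefixE)
  then show "strict_prefix (ddf F j s) (ddf F j x)"
    by (intro strict_prefixI'[where z = False and zs = "False # r"]) simp
next
  assume sp: "strict_prefix (ddf F j s) (ddf F j x)"
  show "strict_prefix (fm F j s) (fm F j x)"
  proof (rule ccontr)
    assume not_sp: "\<not> strict_prefix (fm F j s) (fm F j x)"
    have less: "length (fm F j s) < length (fm F j x)"
      using prefix_length_less[OF sp] by (simp add: length_ddf[OF j])
    with not_sp have "\<not> prefix (fm F j s) (fm F j x)"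
      by (auto simp: strict_prefix_def)
    moreover have "\<not> prefix (fm F j x) (fm F j s)"
      using less prefix_length_le leD by blast
    ultimately have "fm F j s \<parallel> fm F j x" by (rule parallelI)
    from parallel_decomp[OF this]
    obtain v b w c w' where "b \<noteq> c" and s: "fm F j s = v @ b # w" and x: "fm F j x = v @ c # w'"
      by blast
    then have "ddbit F j (fm F j s) (length v) \<noteq> ddbit F j (fm F j x) (length v)"
      by (rule ddbit_first_difference[OF j, rotated 2])
    moreover have "ddf F j s ! length v = ddf F j x ! length v"
      using sp s by (intro prefix_nth) (simp_all add: strict_prefix_def length_ddf[OF j])
    ultimately show False using s x by (simp add: ddf_eq_ddword[OF j] nth_ddword)
  qed
qed

lemma Pbar_ddF_codeword:
  assumes j: "j < ntab F"
  shows "Pbar (ddF F) 2 j (ddf F j s) =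
           (if \<exists>x. strict_prefix (fm F j s) (fm F j x) then {[False, False]} else {})"
proof -
  have "c = [False, False]" if c_in: "c \<in> Pbar (ddF F) 2 j (ddf F j s)" for c
  proof -
    obtain x xs where c: "length c = 2"
      and pre: "prefix (ddf F j s @ c) (ddf F j x @ fstar (ddF F) (tm F j x) xs)"
      and sp: "strict_prefix (ddf F j s) (ddf F j x)"
      using c_in[unfolded Pbar_def mem_Collect_eq fstar.simps fm_ddF tm_ddF] by blast
    have "prefix (ddf F j s @ [False, False]) (ddf F j x @ fstar (ddF F) (tm F j x) xs)"
      using ddf_strict_prefix_extends[OF j] sp ddf_strict_prefix_iff[OF j] by auto
    with pre have "ddf F j s @ c = ddf F j s @ [False, False]"
      by (rule prefix_same_length_eq) (simp add: c)
    then show ?thesis by simp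
  qed
  moreover have "[False, False] \<in> Pbar (ddF F) 2 j (ddf F j s)"
    if "strict_prefix (fm F j s) (fm F j x)" for x
    using that ddf_strict_prefix_iff[OF j] ddf_strict_prefix_extends[OF j]
    by (intro Pbar_memI[where w = "[]" and x = x]) (simp_all add: is_code_prefix_def)
  moreover have "Pbar (ddF F) 2 j (ddf F j s) = {}" if "\<not> (\<exists>x. strict_prefix (fm F j s) (fm F j x))"
    using that ddf_strict_prefix_iff[OF j] by (auto simp: Pbar_def)
  ultimately show ?thesis by auto
qed

section \<open>The two-bit prefixes of the transformed code\<close>

lemma nth_ddf_0:
  assumes j: "j < ntab F" and no_empty: "\<forall>y. fm F j y \<noteq> []"
  shows "ddf F j x ! 0 = head_code F j (fm F j x) ! 0"
proof -
  have "\<not> after_codeword F j (fm F j x) 0"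
    using no_empty after_codeword_0 by blast
  moreover have "0 < length (fm F j x)"
    using no_empty by simp
  ultimately show ?thesis by (simp add: ddf_eq_ddword[OF j] nth_ddword ddbit_def)
qed

lemma is_code_prefix_ddF_single_no_empty:
  assumes j: "j < ntab F" and no_empty: "\<forall>y. fm F j y \<noteq> []"
  shows "is_code_prefix (ddF F) j [d]"
proof -
  obtain g where g: "head_code F j [g] ! 0 = d"
  proof (cases "card (Pk F 2 j []) = 3")
    case True
    obtain a where "\<And>g. branching F j g \<longleftrightarrow> g \<noteq> a"
      using branching_card_3[OF j True] by blast
    with True that[of "if d then \<not> a else a"] show ?thesis by (simp add: head_code_def)
  qed (simp add: head_code_def)
  obtain x xs where "prefix [g] (fm F j x @ fstar F (tm F j x) xs)"
    using is_code_prefix_single[OF j, of g] by (auto simp: is_code_prefix_def)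
  moreover have "fm F j x \<noteq> []" using no_empty by blast
  ultimately have "prefix [g] (fm F j x)" by (cases "fm F j x") auto
  then have "ddf F j x ! 0 = d"
    using g nth_ddf_0[OF j no_empty, of x] nth_head_code_prefix[of "[g]" "fm F j x" 0 F j] by simp
  moreover have "ddf F j x \<noteq> []"
    using \<open>fm F j x \<noteq> []\<close> length_ddf[OF j, of x] by (metis length_0_conv)
  ultimately have "prefix [d] (ddf F j x)" by (cases "ddf F j x") auto
  then show ?thesis by (rule is_code_prefix_codeword[where G = "ddF F", simplified])
qed

lemma is_code_prefix_ddF_single:
  assumes j: "j < ntab F"
  shows "is_code_prefix (ddF F) j [d]"
proof (cases "\<exists>a. fm F j a = []")
  case False
  then show ?thesis using is_code_prefix_ddF_single_no_empty[OF j] by blast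
next
  case True
  then obtain a where a: "fm F j a = []" ..
  then have ddf_a: "ddf F j a = []" using length_ddf[OF j, of a] by simp
  show ?thesis
  proof (cases d)
    case True
    have "\<forall>y. fm F (tm F j a) y \<noteq> []"
      using fm_nonempty_card_3[OF tm_less[OF j] empty_codeword_card(2)[OF j a]] by blast
    then have "is_code_prefix (ddF F) (tm F j a) [d]"
      using is_code_prefix_ddF_single_no_empty[OF tm_less[OF j]] by blast
    with ddf_a show ?thesis using is_code_prefix_append[of "ddF F" j a] by simp
  next
    case False
    obtain x where "strict_prefix (fm F j a) (fm F j x)"
      using empty_codeword_strict_prefix[OF j a] .
    from ddf_strict_prefix_extends[OF j this] ddf_a have "prefix [False, False] (ddf F j x)"
      by simp
    then have "prefix [d] (ddf F j x)" using False by (cases "ddf F j x") auto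
    then show ?thesis by (rule is_code_prefix_codeword[where G = "ddF F", simplified])
  qed
qed

lemma head_code_in_Pk_ddF:
  assumes j: "j < ntab F" and no_empty: "\<forall>y. fm F j y \<noteq> []" and c: "c \<in> Pk F 2 j []"
  shows "head_code F j c \<in> Pk (ddF F) 2 j []"
proof -
  obtain c0 c1 where c_eq: "c = [c0, c1]"
    using c Pk_two_subset two_bit_words_eq by blast
  obtain x xs where pre: "prefix c (fm F j x @ fstar F (tm F j x) xs)"
    using c by (auto simp: Pk_Nil_eq is_code_prefix_def)
  show ?thesis
  proof (cases "\<exists>y. fm F j y = [c0]")
    case True
    then obtain y where y: "fm F j y = [c0]" ..
    have "\<not> after_codeword F j [c0] 0"
      using after_codeword_0 no_empty by blast
    then have "ddf F j y = [head_code F j c ! 0]"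
      using nth_head_code_prefix[of "[c0]" c 0 F j]
      by (simp add: ddf_eq_ddword[OF j] y ddword_def ddbit_def c_eq)
    moreover have "is_code_prefix (ddF F) (tm F j y) [head_code F j c ! 1]"
      using is_code_prefix_ddF_single[OF tm_less[OF j]] .
    ultimately have "is_code_prefix (ddF F) j [head_code F j c ! 0, head_code F j c ! 1]"
      using is_code_prefix_append[of "ddF F" j y] by simp
    moreover have "[head_code F j c ! 0, head_code F j c ! 1] = head_code F j c"
      using c_eq by (simp add: head_code_def)
    ultimately show ?thesis by (simp add: Pk_Nil_eq c_eq)
  next
    case False
    have "fm F j x ! 0 = c0" "fm F j x \<noteq> []"
      using no_empty prefix_nth[OF pre, of 0] by (simp_all add: c_eq nth_append)
    with False have "2 \<le> length (fm F j x)"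
      by (cases "fm F j x" rule: remdups_adj.cases) auto
    then have "prefix c (fm F j x)"
      using pre c_eq prefix_length_prefix[of c _ "fm F j x"] by simp
    then have "prefix (ddword F j c) (ddf F j x)"
      by (simp add: ddf_eq_ddword[OF j] prefix_ddword)
    moreover have "\<forall>p<length c. \<not> after_codeword F j c p"
    proof (intro allI impI)
      fix p assume "p < length c"
      then have "p = 0 \<or> p = 1" by (auto simp: c_eq)
      then show "\<not> after_codeword F j c p"
        using no_empty False after_codeword_0[of F j c] after_codeword_1[of F j c]
        by (auto simp: c_eq)
    qed
    ultimately have "prefix (head_code F j c) (ddf F j x)"
      by (simp add: ddword_eq_head_code)
    then show ?thesis
      using is_code_prefix_codeword[where G = "ddF F"] by (simp add: Pk_Nil_eq c_eq)
  qed
qed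

lemma False_False_notin_Pk_ddF:
  assumes j: "j < ntab F" and card3: "card (Pk F 2 j []) = 3"
  shows "[False, False] \<notin> Pk (ddF F) 2 j []"
proof
  assume "[False, False] \<in> Pk (ddF F) 2 j []"
  then obtain x xs where pre: "prefix [False, False] (ddf F j x @ fstar (ddF F) (tm F j x) xs)"
    by (auto simp: Pk_Nil_eq is_code_prefix_def)
  let ?u = "fm F j x"
  have no_empty: "\<forall>y. fm F j y \<noteq> []" using fm_nonempty_card_3[OF j card3] by blast
  then have "ddf F j x \<noteq> []" using length_ddf[OF j, of x] by (metis length_0_conv)
  then have "\<not> branching F j (?u ! 0)"
    using prefix_nth[OF pre, of 0] nth_ddf_0[OF j no_empty, of x] no_empty card3
    by (simp add: nth_append head_code_def nth_recode_head)
  then have no_single: "\<forall>y. fm F j y \<noteq> [?u ! 0]" and "?u \<noteq> [?u ! 0]"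
    using branching_single_codeword[OF j] by blast+
  then have two: "2 \<le> length ?u"
    using no_empty by (cases ?u rule: remdups_adj.cases) auto
  have "\<not> after_codeword F j ?u 1"
    using after_codeword_1 no_empty no_single by blast
  with two \<open>\<not> branching F j (?u ! 0)\<close> card3 have "ddf F j x ! 1"
    by (simp add: ddf_eq_ddword[OF j] nth_ddword ddbit_def head_code_def nth_recode_head)
  then show False
    using prefix_nth[OF pre, of 1] two by (simp add: nth_append length_ddf[OF j])
qed

lemma Pk_ddF_card_3:
  assumes j: "j < ntab F" and card3: "card (Pk F 2 j []) = 3"
  shows "Pk (ddF F) 2 j [] = {[False, True], [True, False], [True, True]}"
proof
  show "Pk (ddF F) 2 j [] \<subseteq> {[False, True], [True, False], [True, True]}"
    using Pk_two_subset[of "ddF F" j] False_False_notin_Pk_ddF[OF j card3] by (auto simp: two_bit_words_eq)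
next
  obtain a e where P: "Pk F 2 j [] = two_bit_words - {[a, e]}"
    using Pk_card_3_eq[OF j card3] .
  then have br: "branching F j g \<longleftrightarrow> g \<noteq> a" for g
    by (auto simp: branching_def two_bit_words_def)
  have "head_code F j [g, b] \<in> Pk (ddF F) 2 j []" if "g \<noteq> a \<or> b \<noteq> e" for g b
    using head_code_in_Pk_ddF[OF j] fm_nonempty_card_3[OF j card3] P that
    by (simp add: two_bit_words_def)
  from this[of a "\<not> e"] this[of "\<not> a" False] this[of "\<not> a" True]
  show "{[False, True], [True, False], [True, True]} \<subseteq> Pk (ddF F) 2 j []"
    by (simp add: head_code_def card3 br)
qed

lemma Pk_ddF_card_4:
  assumes j: "j < ntab F" and card4: "card (Pk F 2 j []) = 4"
  shows "Pk (ddF F) 2 j [] = two_bit_words"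
proof (rule antisym[OF Pk_two_subset])
  show "two_bit_words \<subseteq> Pk (ddF F) 2 j []"
  proof (cases "\<exists>a. fm F j a = []")
    case False
    have "Pk F 2 j [] = two_bit_words"
      using card4 by (cases rule: Pk_cases[OF j]) auto
    with False show ?thesis
      using head_code_in_Pk_ddF[OF j] card4 by (auto simp: head_code_def)
  next
    case True
    then obtain a where a: "fm F j a = []" ..
    then have ddf_a: "ddf F j a = []" using length_ddf[OF j, of a] by simp
    have "Pk (ddF F) 2 (tm F j a) [] \<subseteq> Pk (ddF F) 2 j []"
      using is_code_prefix_append[of "ddF F" j a] ddf_a by (auto simp: Pk_Nil_eq)
    moreover have "Pk (ddF F) 2 (tm F j a) [] = {[False, True], [True, False], [True, True]}"
      using Pk_ddF_card_3[OF tm_less[OF j] empty_codeword_card(2)[OF j a]] .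
    moreover have "[False, False] \<in> Pk (ddF F) 2 j []"
    proof -
      obtain x where "strict_prefix (fm F j a) (fm F j x)"
        using empty_codeword_strict_prefix[OF j a] .
      from ddf_strict_prefix_extends[OF j this] ddf_a have "prefix [False, False] (ddf F j x)"
        by simp
      then show ?thesis
        using is_code_prefix_codeword[where G = "ddF F"] by (simp add: Pk_Nil_eq)
    qed
    ultimately show ?thesis by (auto simp: two_bit_words_eq)
  qed
qed

end

theorem lemma26:
  fixes \<mu> :: "'a::finite \<Rightarrow> real" and F :: "'a code_tuple" and i :: nat
  assumes "card (UNIV :: 'a set) \<ge> 2"
    and "\<forall>s. 0 < \<mu> s \<and> \<mu> s \<le> 1"
    and "(\<Sum>s\<in>UNIV. \<mu> s) = 1"
    and "F2 \<mu> F"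
    and "i < ntab F"
  shows "(card (Pk F 2 i []) = 3 \<longrightarrow>
            Pk (ddF F) 2 i [] = {[False, True], [True, False], [True, True]})
       \<and> (card (Pk F 2 i []) = 4 \<longrightarrow>
            Pk (ddF F) 2 i [] = {[False, False], [False, True], [True, False], [True, True]})
       \<and> (\<forall>s. (Pbar F 0 i (fm F i s) = {} \<longrightarrow> Pbar (ddF F) 2 i (fm (ddF F) i s) = {})
            \<and> (Pbar F 0 i (fm F i s) \<noteq> {} \<longrightarrow> Pbar (ddF F) 2 i (fm (ddF F) i s) = {[False, False]}))"
proof -
  have "\<exists>s s' :: 'a. s \<noteq> s'"
    using assms(1) card_le_Suc0_iff_eq[of "UNIV :: 'a set"] by auto
  then interpret F2_tuple F
    using assms(4) by unfold_locales (auto simp: F2_def)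
  show ?thesis
    using Pk_ddF_card_3[OF assms(5)] Pk_ddF_card_4[OF assms(5)] Pbar_ddF_codeword[OF assms(5)]
    by (simp add: Pbar_zero two_bit_words_eq)
qed

end
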